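(* Let $\mathcal L$ be an algebraic system, $\mathbf{STop}\mathcal{L}$ the category of semitopological $\mathcal L$-structures, and $\mathcal C$ an epireflective subcategory of $\mathbf{Top}$. Then $\mathrm{r}_{\mathcal C}(\mathbf{STop}\mathcal{L})\subseteq\mathbf{STop}\mathcal{L}$: for each $(\mathfrak U,X)\in\mathbf{STop}\mathcal{L}$, where $X$ is the domain of $\mathfrak U$, the space $\mathrm{r}_{\mathcal C}X$ is the domain of an $\mathcal L$-structure $\mathfrak V$ with $(\mathfrak V,\mathrm{r}_{\mathcal C}X)\in\mathbf{STop}\mathcal{L}$. Furthermore, the reflection arrow $\mathrm{r}_{(X,\mathcal C)}\colon X\to\mathrm{r}_{\mathcal C}X$ is an $\mathcal L$-homomorphism in $\mathbf{STop}\mathcal{L}$.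
   Context: An epireflective subcategory $\mathcal C$ of $\mathbf{Top}$ is a full, isomorphism-closed subcategory closed under products and subspaces; each space $X$ has a reflection $\mathrm{r}_{\mathcal C}X\in\mathcal C$ with a continuous surjection $\mathrm{r}_{(X,\mathcal C)}\colon X\to \mathrm{r}_{\mathcal C}X$ through which every continuous map from $X$ into a space of $\mathcal C$ factors uniquely. An algebraic system $\mathcal L$ consists of constant symbols, function symbols of finite arity $\ge1$ and a set of equations; an $\mathcal L$-structure is a set with interpretations of the constants and operations satisfying the equations; a semitopological $\mathcal L$-structure is one on a topological space in which all operations are separately continuous (continuous in each variable with the others fixed); $\mathcal L$-homomorphisms are continuous maps preserving constants and operations. *)

theory Defs
  imports "HOL-Analysis.Analysis"
begin

datatype ('c, 'f) trm = Var nat | Const 'c | Fn 'f "('c, 'f) trm list"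

record ('c, 'f) alg_system =
  consts_of :: "'c set"
  funs_of :: "'f set"
  arity :: "'f \<Rightarrow> nat"
  eqns_of :: "(('c, 'f) trm \<times> ('c, 'f) trm) set"

fun wf_trm :: "('c, 'f) alg_system \<Rightarrow> ('c, 'f) trm \<Rightarrow> bool" where
  "wf_trm L (Var n) = True"
| "wf_trm L (Const c) = (c \<in> consts_of L)"
| "wf_trm L (Fn f ts) = (f \<in> funs_of L \<and> length ts = arity L f \<and> (\<forall>t\<in>set ts. wf_trm L t))"

definition algebraic_system :: "('c, 'f) alg_system \<Rightarrow> bool" where
  "algebraic_system L \<longleftrightarrow>
     (\<forall>f\<in>funs_of L. arity L f \<ge> 1) \<and>
     (\<forall>(l, r)\<in>eqns_of L. wf_trm L l \<and> wf_trm L r)"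

type_synonym ('c, 'f, 'a) L_interp = "('c \<Rightarrow> 'a) \<times> ('f \<Rightarrow> 'a list \<Rightarrow> 'a)"

fun eval_trm :: "('c, 'f, 'a) L_interp \<Rightarrow> (nat \<Rightarrow> 'a) \<Rightarrow> ('c, 'f) trm \<Rightarrow> 'a" where
  "eval_trm U \<rho> (Var n) = \<rho> n"
| "eval_trm U \<rho> (Const c) = fst U c"
| "eval_trm U \<rho> (Fn f ts) = snd U f (map (eval_trm U \<rho>) ts)"

definition L_structure :: "('c, 'f) alg_system \<Rightarrow> 'a set \<Rightarrow> ('c, 'f, 'a) L_interp \<Rightarrow> bool" where
  "L_structure L A U \<longleftrightarrow>
     (\<forall>c\<in>consts_of L. fst U c \<in> A) \<and>
     (\<forall>f\<in>funs_of L. \<forall>as. length as = arity L f \<and> set as \<subseteq> A \<longrightarrow> snd U f as \<in> A) \<and>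
     (\<forall>(l, r)\<in>eqns_of L. \<forall>\<rho>. range \<rho> \<subseteq> A \<longrightarrow> eval_trm U \<rho> l = eval_trm U \<rho> r)"

definition semitop_L_structure :: "('c, 'f) alg_system \<Rightarrow> 'a topology \<Rightarrow> ('c, 'f, 'a) L_interp \<Rightarrow> bool" where
  "semitop_L_structure L X U \<longleftrightarrow>
     L_structure L (topspace X) U \<and>
     (\<forall>f\<in>funs_of L. \<forall>as i. length as = arity L f \<and> set as \<subseteq> topspace X \<and> i < arity L f \<longrightarrow>
        continuous_map X X (\<lambda>x. snd U f (as[i := x])))"

definition L_hom :: "('c, 'f) alg_system \<Rightarrow> 'a topology \<Rightarrow> ('c, 'f, 'a) L_interp \<Rightarrow>
                     'b topology \<Rightarrow> ('c, 'f, 'b) L_interp \<Rightarrow> ('a \<Rightarrow> 'b) \<Rightarrow> bool" where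
  "L_hom L X U Y V h \<longleftrightarrow>
     continuous_map X Y h \<and>
     (\<forall>c\<in>consts_of L. h (fst U c) = fst V c) \<and>
     (\<forall>f\<in>funs_of L. \<forall>as. length as = arity L f \<and> set as \<subseteq> topspace X \<longrightarrow>
        h (snd U f as) = snd V f (map h as))"

text \<open>A class of topological spaces (on the carrier type 'b), full and isomorphism-closed,
  closed under subspaces and under products (products indexed by sets of the same
  type, represented up to homeomorphism in 'b).\<close>
definition epireflective_class :: "('b topology \<Rightarrow> bool) \<Rightarrow> bool" where
  "epireflective_class C \<longleftrightarrow>
     (\<forall>Y Z. C Y \<and> Y homeomorphic_space Z \<longrightarrow> C Z) \<and>
     (\<forall>Y S. C Y \<longrightarrow> C (subtopology Y S)) \<and>
     (\<forall>(I :: 'b set) (Y :: 'b \<Rightarrow> 'b topology) Z.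
        (\<forall>i\<in>I. C (Y i)) \<and> product_topology Y I homeomorphic_space Z \<longrightarrow> C Z)"

definition is_reflection :: "('b topology \<Rightarrow> bool) \<Rightarrow> 'a topology \<Rightarrow> 'b topology \<Rightarrow> ('a \<Rightarrow> 'b) \<Rightarrow> bool" where
  "is_reflection C X R r \<longleftrightarrow>
     C R \<and> continuous_map X R r \<and> r ` topspace X = topspace R \<and>
     (\<forall>Y g. C Y \<and> continuous_map X Y g \<longrightarrow>
        (\<exists>h. continuous_map R Y h \<and> (\<forall>x\<in>topspace X. h (r x) = g x)) \<and>
        (\<forall>h h'. continuous_map R Y h \<and> (\<forall>x\<in>topspace X. h (r x) = g x) \<and>
                continuous_map R Y h' \<and> (\<forall>x\<in>topspace X. h' (r x) = g x) \<longrightarrow>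
                (\<forall>y\<in>topspace R. h y = h' y)))"

end

theory Submission
  imports Defs
begin

text \<open>
  Every operation of \<open>X\<close>, followed by the reflection arrow \<open>r\<close> and viewed as a function of
  one argument, is a continuous map from \<open>X\<close> into the space \<open>R\<close> of \<open>C\<close>; hence it factors
  through \<open>r\<close>. So \<open>r\<close>-equivalent arguments, changed one coordinate at a time, give
  \<open>r\<close>-equivalent values: the kernel of \<open>r\<close> is a congruence, and \<open>R = r(X)\<close> inherits the
  operations. Equations transfer because \<open>r\<close> commutes with term evaluation, and the
  factorisations through \<open>r\<close> are precisely the translations of the new operations, which
  are therefore separately continuous.
\<close>

lemma L_structure_const_in_carrier:
  "L_structure L A U \<Longrightarrow> c \<in> consts_of L \<Longrightarrow> fst U c \<in> A"
  unfolding L_structure_def by blast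

lemma L_structure_op_in_carrier:
  "L_structure L A U \<Longrightarrow> f \<in> funs_of L \<Longrightarrow> length as = arity L f \<Longrightarrow> set as \<subseteq> A \<Longrightarrow>
    snd U f as \<in> A"
  unfolding L_structure_def by blast

lemma L_structure_eqnD:
  "L_structure L A U \<Longrightarrow> (l, l') \<in> eqns_of L \<Longrightarrow> range \<rho> \<subseteq> A \<Longrightarrow>
    eval_trm U \<rho> l = eval_trm U \<rho> l'"
  unfolding L_structure_def by fast

lemma eval_trm_in_carrier:
  assumes "L_structure L A U" "wf_trm L t" "range \<sigma> \<subseteq> A"
  shows "eval_trm U \<sigma> t \<in> A"
  using assms(2)
proof (induction t)
  case (Fn f ts)
  then show ?case
    using assms(1) by (auto intro!: L_structure_op_in_carrier)
qed (use assms in \<open>auto intro: L_structure_const_in_carrier\<close>)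

lemma eval_trm_hom:
  assumes U: "L_structure L A U" and t: "wf_trm L t" and \<sigma>: "range \<sigma> \<subseteq> A"
    and hom_const: "\<And>c. c \<in> consts_of L \<Longrightarrow> h (fst U c) = fst V c"
    and hom_op: "\<And>f as. f \<in> funs_of L \<Longrightarrow> length as = arity L f \<Longrightarrow> set as \<subseteq> A \<Longrightarrow>
                   h (snd U f as) = snd V f (map h as)"
  shows "eval_trm V (h \<circ> \<sigma>) t = h (eval_trm U \<sigma> t)"
  using t
proof (induction t)
  case (Fn f ts)
  then have args: "set (map (eval_trm U \<sigma>) ts) \<subseteq> A"
    using eval_trm_in_carrier[OF U _ \<sigma>] by auto
  have "map (eval_trm V (h \<circ> \<sigma>)) ts = map h (map (eval_trm U \<sigma>) ts)"
    using Fn by (auto simp: comp_def)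
  then have "eval_trm V (h \<circ> \<sigma>) (Fn f ts) = snd V f (map h (map (eval_trm U \<sigma>) ts))"
    by (simp only: eval_trm.simps)
  also have "\<dots> = h (eval_trm U \<sigma> (Fn f ts))"
    using Fn args by (simp add: hom_op)
  finally show ?case .
qed (simp_all add: hom_const)

definition kernel_congruence ::
    "('c, 'f) alg_system \<Rightarrow> 'a set \<Rightarrow> ('c, 'f, 'a) L_interp \<Rightarrow> ('a \<Rightarrow> 'b) \<Rightarrow> bool" where
  "kernel_congruence L A U r \<longleftrightarrow>
     (\<forall>f\<in>funs_of L. \<forall>as bs. length as = arity L f \<and> length bs = arity L f \<and>
        set as \<subseteq> A \<and> set bs \<subseteq> A \<and> map r as = map r bs \<longrightarrow> r (snd U f as) = r (snd U f bs))"

lemma kernel_congruenceD: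
  assumes "kernel_congruence L A U r" "f \<in> funs_of L"
    and "length as = arity L f" "length bs = arity L f" "set as \<subseteq> A" "set bs \<subseteq> A"
    and "map r as = map r bs"
  shows "r (snd U f as) = r (snd U f bs)"
  using assms unfolding kernel_congruence_def by blast

text \<open>Independent of the representatives chosen by \<open>inv_into\<close> as soon as
  \<open>kernel_congruence L A U r\<close> holds.\<close>
definition image_interp ::
    "('a \<Rightarrow> 'b) \<Rightarrow> 'a set \<Rightarrow> ('c, 'f, 'a) L_interp \<Rightarrow> ('c, 'f, 'b) L_interp" where
  "image_interp r A U = ((\<lambda>c. r (fst U c)), (\<lambda>f bs. r (snd U f (map (inv_into A r) bs))))"

lemma image_interp_hom_op:
  assumes cong: "kernel_congruence L A U r" and f: "f \<in> funs_of L"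
    and as: "length as = arity L f" "set as \<subseteq> A"
  shows "r (snd U f as) = snd (image_interp r A U) f (map r as)"
proof -
  let ?as' = "map (inv_into A r) (map r as)"
  have "r (snd U f ?as') = r (snd U f as)"
  proof (rule kernel_congruenceD[OF cong f])
    show "set ?as' \<subseteq> A"
      using as by (auto intro!: inv_into_into)
    show "map r ?as' = map r as"
      using as by (auto intro!: f_inv_into_f)
  qed (use as in auto)
  then show ?thesis
    by (simp add: image_interp_def)
qed

lemma L_structure_image_interp:
  assumes L: "algebraic_system L" and U: "L_structure L A U" and cong: "kernel_congruence L A U r"
  shows "L_structure L (r ` A) (image_interp r A U)"
proof -
  let ?V = "image_interp r A U" and ?s = "inv_into A r"
  have const_closed: "fst ?V c \<in> r ` A" if "c \<in> consts_of L" for c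
    using that by (simp add: image_interp_def L_structure_const_in_carrier[OF U])
  have op_closed: "snd ?V f bs \<in> r ` A"
    if f: "f \<in> funs_of L" and bs: "length bs = arity L f" "set bs \<subseteq> r ` A" for f bs
  proof -
    have "set (map ?s bs) \<subseteq> A"
      using bs by (auto intro!: inv_into_into)
    then show ?thesis
      using L_structure_op_in_carrier[OF U f] bs by (simp add: image_interp_def)
  qed
  have eqn_holds: "eval_trm ?V \<rho> l = eval_trm ?V \<rho> l'"
    if eqn: "(l, l') \<in> eqns_of L" and \<rho>: "range \<rho> \<subseteq> r ` A" for l l' \<rho>
  proof -
    have s\<rho>: "range (?s \<circ> \<rho>) \<subseteq> A"
      using \<rho> by (auto intro!: inv_into_into)
    have \<rho>_eq: "r \<circ> (?s \<circ> \<rho>) = \<rho>"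
    proof
      fix n
      have "\<rho> n \<in> r ` A"
        using \<rho> by blast
      then show "(r \<circ> (?s \<circ> \<rho>)) n = \<rho> n"
        by (simp add: f_inv_into_f)
    qed
    have wf: "wf_trm L l" "wf_trm L l'"
      using L eqn unfolding algebraic_system_def by auto
    have hom_const: "\<And>c. r (fst U c) = fst ?V c"
      by (simp add: image_interp_def)
    note eval = eval_trm_hom[OF U _ s\<rho> hom_const image_interp_hom_op[OF cong], unfolded \<rho>_eq]
    show ?thesis
      using eval[OF wf(1)] eval[OF wf(2)] L_structure_eqnD[OF U eqn s\<rho>] by simp
  qed
  show ?thesis
    unfolding L_structure_def using const_closed op_closed eqn_holds by blast
qed

lemma eq_if_coordinatewise_invariant:
  assumes as: "length as = n" "set as \<subseteq> A"
    and bs: "length bs = n" "set bs \<subseteq> A"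
    and eq: "map r as = map r bs"
    and step: "\<And>cs i x y. length cs = n \<Longrightarrow> set cs \<subseteq> A \<Longrightarrow> i < n \<Longrightarrow> x \<in> A \<Longrightarrow> y \<in> A \<Longrightarrow>
                 r x = r y \<Longrightarrow> F (cs[i := x]) = F (cs[i := y])"
  shows "F as = F bs"
proof -
  define cs where "cs k = take k bs @ drop k as" for k
  have cs_len: "length (cs k) = n" for k
    using as bs by (simp add: cs_def)
  have cs_carrier: "set (cs k) \<subseteq> A" for k
    using as bs by (auto simp: cs_def dest: in_set_takeD in_set_dropD)
  have hybrid: "F as = F (cs k)" if "k \<le> n" for k
    using that
  proof (induction k)
    case 0
    show ?case by (simp add: cs_def)
  next
    case (Suc k)
    then have k: "k < n" by simp
    have "cs k ! k = as ! k"
      using k as bs by (simp add: cs_def nth_append)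
    then have "F (cs k) = F ((cs k)[k := as ! k])"
      by (metis list_update_id)
    also have "\<dots> = F ((cs k)[k := bs ! k])"
    proof (rule step[OF cs_len cs_carrier k])
      show "as ! k \<in> A" "bs ! k \<in> A"
        using k as bs by auto
      show "r (as ! k) = r (bs ! k)"
        using k as bs eq by (metis nth_map)
    qed
    also have "(cs k)[k := bs ! k] = cs (Suc k)"
    proof -
      have "drop k as = as ! k # drop (Suc k) as"
        using k as by (simp add: Cons_nth_drop_Suc)
      moreover have "take (Suc k) bs = take k bs @ [bs ! k]"
        using k bs by (simp add: take_Suc_conv_app_nth)
      ultimately show ?thesis
        using k bs by (simp add: cs_def list_update_append)
    qed
    finally show ?case using Suc by simp
  qed
  moreover have "cs n = bs"
    using as bs by (simp add: cs_def)
  ultimately show ?thesis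
    using hybrid[of n] by simp
qed

lemma is_reflectionD:
  assumes "is_reflection C X R r"
  shows "C R" "continuous_map X R r" "r ` topspace X = topspace R"
  using assms unfolding is_reflection_def by blast+

lemma reflection_factorization:
  assumes "is_reflection C X R r" "C Y" "continuous_map X Y g"
  obtains h where "continuous_map R Y h" "\<And>x. x \<in> topspace X \<Longrightarrow> h (r x) = g x"
proof -
  have "\<exists>h. continuous_map R Y h \<and> (\<forall>x\<in>topspace X. h (r x) = g x)"
    using assms unfolding is_reflection_def by auto
  then show ?thesis
    using that by blast
qed

lemma reflection_respects_kernel:
  assumes "is_reflection C X R r" "C Y" "continuous_map X Y g"
    and "x \<in> topspace X" "y \<in> topspace X" "r x = r y"
  shows "g x = g y"
proof -
  obtain h where "\<And>x. x \<in> topspace X \<Longrightarrow> h (r x) = g x"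
    using reflection_factorization[OF assms(1-3)] by blast
  then show ?thesis
    using assms(4-6) by metis
qed

lemma semitop_L_structureD:
  assumes "semitop_L_structure L X U"
  shows "L_structure L (topspace X) U"
    and "\<And>f as i. f \<in> funs_of L \<Longrightarrow> length as = arity L f \<Longrightarrow> set as \<subseteq> topspace X \<Longrightarrow>
           i < arity L f \<Longrightarrow> continuous_map X X (\<lambda>x. snd U f (as[i := x]))"
  using assms unfolding semitop_L_structure_def by blast+

lemma reflection_kernel_congruence:
  assumes U: "semitop_L_structure L X U" and refl: "is_reflection C X R r"
  shows "kernel_congruence L (topspace X) U r"
  unfolding kernel_congruence_def
proof (intro ballI allI impI, elim conjE)
  fix f as bs
  assume f: "f \<in> funs_of L"
    and args: "length as = arity L f" "set as \<subseteq> topspace X" "length bs = arity L f" "set bs \<subseteq> topspace X"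
    and kernel: "map r as = map r bs"
  from args kernel show "r (snd U f as) = r (snd U f bs)"
  proof (rule eq_if_coordinatewise_invariant[where F = "\<lambda>as. r (snd U f as)"])
    fix cs i x y
    assume "length cs = arity L f" "set cs \<subseteq> topspace X" "i < arity L f"
      and xy: "x \<in> topspace X" "y \<in> topspace X" "r x = r y"
    then have "continuous_map X R (r \<circ> (\<lambda>x. snd U f (cs[i := x])))"
      using semitop_L_structureD(2)[OF U f] is_reflectionD(2)[OF refl] by (blast intro: continuous_map_compose)
    then have "(r \<circ> (\<lambda>x. snd U f (cs[i := x]))) x = (r \<circ> (\<lambda>x. snd U f (cs[i := x]))) y"
      using reflection_respects_kernel[OF refl is_reflectionD(1)[OF refl] _ xy] by blast
    then show "r (snd U f (cs[i := x])) = r (snd U f (cs[i := y]))"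
      by simp
  qed
qed

lemma separately_continuous_image_interp:
  assumes U: "semitop_L_structure L X U" and refl: "is_reflection C X R r"
    and f: "f \<in> funs_of L" and bs: "length bs = arity L f" "set bs \<subseteq> topspace R" and i: "i < arity L f"
  shows "continuous_map R R (\<lambda>y. snd (image_interp r (topspace X) U) f (bs[i := y]))"
proof -
  let ?s = "inv_into (topspace X) r"
  note R = is_reflectionD[OF refl]
  have "set (map ?s bs) \<subseteq> topspace X"
    using bs R(3) by (auto intro!: inv_into_into)
  then have "continuous_map X X (\<lambda>x. snd U f ((map ?s bs)[i := x]))"
    using semitop_L_structureD(2)[OF U f] bs i by simp
  then obtain h where h: "continuous_map R R h"
    and h_r: "\<And>x. x \<in> topspace X \<Longrightarrow> h (r x) = (r \<circ> (\<lambda>x. snd U f ((map ?s bs)[i := x]))) x"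
    using reflection_factorization[OF refl R(1) continuous_map_compose[OF _ R(2)]] by blast
  show ?thesis
  proof (rule continuous_map_eq[OF h])
    fix y
    assume "y \<in> topspace R"
    then have "?s y \<in> topspace X" "r (?s y) = y"
      using R(3) by (auto intro: inv_into_into f_inv_into_f)
    then have "h y = r (snd U f ((map ?s bs)[i := ?s y]))"
      using h_r[of "?s y"] by simp
    then show "h y = snd (image_interp r (topspace X) U) f (bs[i := y])"
      by (simp add: image_interp_def map_update)
  qed
qed

theorem proposition3p9:
  fixes L :: "('c, 'f) alg_system"
    and C :: "'b topology \<Rightarrow> bool"
    and X :: "'a topology" and U :: "('c, 'f, 'a) L_interp"
    and R :: "'b topology" and r :: "'a \<Rightarrow> 'b"
  assumes "algebraic_system L"
    and "epireflective_class C"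
    and "semitop_L_structure L X U"
    and "is_reflection C X R r"
  shows "\<exists>V :: ('c, 'f, 'b) L_interp. semitop_L_structure L R V \<and> L_hom L X U R V r"
proof (intro exI conjI)
  let ?V = "image_interp r (topspace X) U"
  note U = semitop_L_structureD[OF assms(3)] and R = is_reflectionD[OF assms(4)]
  have cong: "kernel_congruence L (topspace X) U r"
    using reflection_kernel_congruence[OF assms(3,4)] .
  show "semitop_L_structure L R ?V"
    unfolding semitop_L_structure_def
  proof (intro conjI ballI allI impI; (elim conjE)?)
    show "L_structure L (topspace R) ?V"
      using L_structure_image_interp[OF assms(1) U(1) cong] R(3) by simp
    show "continuous_map R R (\<lambda>y. snd ?V f (bs[i := y]))"
      if "f \<in> funs_of L" "length bs = arity L f" "set bs \<subseteq> topspace R" "i < arity L f" for f bs i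
      using separately_continuous_image_interp[OF assms(3,4) that] .
  qed
  show "L_hom L X U R ?V r"
    unfolding L_hom_def
  proof (intro conjI ballI allI impI; (elim conjE)?)
    show "continuous_map X R r"
      by (rule R(2))
    show "r (fst U c) = fst ?V c" for c
      by (simp add: image_interp_def)
    show "r (snd U f as) = snd ?V f (map r as)"
      if "f \<in> funs_of L" "length as = arity L f" "set as \<subseteq> topspace X" for f as
      using image_interp_hom_op[OF cong that] .
  qed
qed

end
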